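(* Let $i_1$ be the largest index $i\in[1,n]$ with $d_P(v_1,v_i)<d_P(v_i,v_n)$ and let $i_2$ be the smallest index $i\in[1,n]$ with $d_P(v_1,v_i)\ge|v_iv_n|$, and suppose $i_2\le i_1$. For each $i\in[i_2,i_1]$ let $j(i)$ be the smallest index $j\in[i,n]$ with $d_P(v_1,v_i)\ge |v_iv_j|+d_P(v_j,v_n)$ (this exists), and let $k(i)$ be the largest index $k\in[i,j(i)]$ with $d_P(v_1,v_i)<|v_iv_{j(i)}|+d_P(v_{j(i)},v_k)$, with $k(i)=0$ if no such $k$ exists. Then for every $i\in[i_2,i_1-1]$, $j(i+1)\le j(i)$ and $k(i+1)\le k(i)$.
   Context: Let $v_1,\dots,v_n$ be points of a metric space with metric $|\cdot|$ (symmetric, nonnegative, $|v_iv_j|=0$ iff $i=j$, triangle inequality). For $i\le j$ let $d_P(v_i,v_j)=\sum_{k=i}^{j-1}|v_kv_{k+1}|$ and $d_P(v_j,v_i)=d_P(v_i,v_j)$. *)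

theory Defs
  imports Complex_Main
begin

definition dP :: "(nat \<Rightarrow> 'a::metric_space) \<Rightarrow> nat \<Rightarrow> nat \<Rightarrow> real" where
  "dP v i j = (if i \<le> j then (\<Sum>k\<in>{i..<j}. dist (v k) (v (Suc k)))
                          else (\<Sum>k\<in>{j..<i}. dist (v k) (v (Suc k))))"

definition jfun :: "(nat \<Rightarrow> 'a::metric_space) \<Rightarrow> nat \<Rightarrow> nat \<Rightarrow> nat" where
  "jfun v n i = (LEAST j. i \<le> j \<and> j \<le> n \<and> dP v 1 i \<ge> dist (v i) (v j) + dP v j n)"

definition kfun :: "(nat \<Rightarrow> 'a::metric_space) \<Rightarrow> nat \<Rightarrow> nat \<Rightarrow> nat" where
  "kfun v n i = (let j = jfun v n i in
     if (\<exists>k. i \<le> k \<and> k \<le> j \<and> dP v 1 i < dist (v i) (v j) + dP v j k)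
     then (GREATEST k. i \<le> k \<and> k \<le> j \<and> dP v 1 i < dist (v i) (v j) + dP v j k)
     else 0)"

end

theory Submission
  imports Defs
begin

text \<open>Moving from i to i+1 raises dP(v_1,v_i) by exactly |v_i v_(i+1)|, while by the triangle
  inequality the competing quantities |v_i v_j| + dP(v_j,v_n) and |v_i v_j| + dP(v_j,v_k) drop
  by at most that amount. So every j admissible for i (other than i itself) stays admissible
  for i+1, which gives j(i+1) \<le> j(i); and every k witnessing k(i+1) also witnesses k(i), because
  replacing v_j(i+1) by v_j(i) changes |v_i v_j| + dP(v_j,v_k) by at most dP(v_j(i+1),v_j(i)).
  That i never qualifies as j(i) for i < i1 follows from the definition of i1, since
  dP(v_1,v_i) is increasing and dP(v_i,v_n) decreasing in i.\<close>

lemma dP_sym: "dP v a b = dP v b a"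
  by (simp add: dP_def)

lemma dP_self [simp]: "dP v a a = 0"
  by (simp add: dP_def)

lemma dP_nonneg: "dP v a b \<ge> 0"
  by (simp add: dP_def sum_nonneg)

lemma dP_add: "a \<le> b \<Longrightarrow> b \<le> c \<Longrightarrow> dP v a c = dP v a b + dP v b c"
  by (simp add: dP_def sum.atLeastLessThan_concat)

lemma dP_Suc_right: "a \<le> b \<Longrightarrow> dP v a (Suc b) = dP v a b + dist (v b) (v (Suc b))"
  by (simp add: dP_def)

lemma dist_le_dP: "a \<le> b \<Longrightarrow> dist (v a) (v b) \<le> dP v a b"
proof (induction b rule: dec_induct)
  case (step b)
  have "dist (v a) (v (Suc b)) \<le> dist (v a) (v b) + dist (v b) (v (Suc b))"
    by (rule dist_triangle)
  also have "\<dots> \<le> dP v a (Suc b)"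
    using step.IH dP_Suc_right[OF step.hyps(1), of v] by linarith
  finally show ?case .
qed simp

lemma dP_prefix_lt_suffix_mono:
  assumes "1 \<le> i" "i \<le> i'" "i' \<le> n" "dP v 1 i' < dP v i' n"
  shows "dP v 1 i < dP v i n"
proof -
  have "dP v 1 i \<le> dP v 1 i'"
    using assms dP_add[of 1 i i' v] dP_nonneg[of v i i'] by simp
  moreover have "dP v i' n \<le> dP v i n"
    using assms dP_add[of i i' n v] dP_nonneg[of v i i'] by simp
  ultimately show ?thesis
    using assms(4) by linarith
qed

lemma dist_le_dP_prefix_mono:
  assumes "1 \<le> m" "m \<le> m'" "dist (v m) x \<le> dP v 1 m"
  shows "dist (v m') x \<le> dP v 1 m'"
proof -
  have "dist (v m') x \<le> dist (v m) x + dP v m m'"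
    using dist_triangle[of "v m'" x "v m"] dist_le_dP[OF assms(2), of v] by (simp add: dist_commute)
  also have "\<dots> \<le> dP v 1 m'"
    using assms dP_add[of 1 m m' v] by simp
  finally show ?thesis .
qed

definition j_candidate :: "(nat \<Rightarrow> 'a::metric_space) \<Rightarrow> nat \<Rightarrow> nat \<Rightarrow> nat \<Rightarrow> bool" where
  "j_candidate v n i j \<longleftrightarrow> i \<le> j \<and> j \<le> n \<and> dist (v i) (v j) + dP v j n \<le> dP v 1 i"

definition k_candidate :: "(nat \<Rightarrow> 'a::metric_space) \<Rightarrow> nat \<Rightarrow> nat \<Rightarrow> nat \<Rightarrow> bool" where
  "k_candidate v i j k \<longleftrightarrow> i \<le> k \<and> k \<le> j \<and> dP v 1 i < dist (v i) (v j) + dP v j k"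

lemma jfun_eq_Least: "jfun v n i = (LEAST j. j_candidate v n i j)"
  by (simp add: jfun_def j_candidate_def add.commute)

lemma kfun_eq_Greatest:
  "kfun v n i = (if \<exists>k. k_candidate v i (jfun v n i) k
                 then GREATEST k. k_candidate v i (jfun v n i) k else 0)"
  unfolding kfun_def k_candidate_def Let_def ..

lemma j_candidate_jfun:
  assumes "i \<le> n" "dist (v i) (v n) \<le> dP v 1 i"
  shows "j_candidate v n i (jfun v n i)"
proof -
  have "j_candidate v n i n"
    using assms by (simp add: j_candidate_def)
  then show ?thesis
    unfolding jfun_eq_Least by (rule LeastI)
qed

lemma j_candidate_gt:
  assumes "dP v 1 i < dP v i n" "j_candidate v n i j"
  shows "Suc i \<le> j"
proof -
  have "j \<noteq> i"
    using assms by (auto simp: j_candidate_def)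
  then show ?thesis
    using assms(2) by (simp add: j_candidate_def)
qed

lemma j_candidate_Suc:
  assumes "1 \<le> i" "Suc i \<le> j" "j_candidate v n i j"
  shows "j_candidate v n (Suc i) j"
proof -
  have "dist (v (Suc i)) (v j) + dP v j n
          \<le> dist (v i) (v (Suc i)) + (dist (v i) (v j) + dP v j n)"
    using dist_triangle[of "v (Suc i)" "v j" "v i"] dist_commute[of "v i" "v (Suc i)"] by simp
  also have "\<dots> \<le> dP v 1 (Suc i)"
    using assms(3) dP_Suc_right[OF assms(1), of v] unfolding j_candidate_def by linarith
  finally show ?thesis
    using assms unfolding j_candidate_def by simp
qed

lemma k_candidate_pred:
  assumes "1 \<le> i" "Suc i \<le> j" "j' \<le> j" "k_candidate v (Suc i) j' k"
  shows "k_candidate v i j k"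
proof -
  have k: "Suc i \<le> k" "k \<le> j'" "dP v 1 (Suc i) < dist (v (Suc i)) (v j') + dP v j' k"
    using assms(4) unfolding k_candidate_def by auto
  have "dist (v (Suc i)) (v j') \<le> dist (v i) (v (Suc i)) + dist (v i) (v j) + dist (v j) (v j')"
    using dist_triangle[of "v (Suc i)" "v j'" "v i"] dist_triangle[of "v i" "v j'" "v j"]
      dist_commute[of "v i" "v (Suc i)"] by simp
  moreover have "dist (v j) (v j') \<le> dP v j' j"
    using dist_le_dP[OF assms(3), of v] by (simp add: dist_commute)
  moreover have "dP v j k = dP v k j' + dP v j' j"
    using k(2) assms(3) dP_add[of k j' j v] by (simp add: dP_sym)
  moreover have "dP v 1 (Suc i) = dP v 1 i + dist (v i) (v (Suc i))"
    using dP_Suc_right[OF assms(1)] .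
  ultimately have "dP v 1 i < dist (v i) (v j) + dP v j k"
    using k(3) by (simp add: dP_sym[of v j' k])
  then show ?thesis
    using k assms(3) unfolding k_candidate_def by simp
qed

lemma kfun_mono:
  assumes "\<And>k. k_candidate v i' (jfun v n i') k \<Longrightarrow> k_candidate v i (jfun v n i) k"
  shows "kfun v n i' \<le> kfun v n i"
proof (cases "\<exists>k. k_candidate v i' (jfun v n i') k")
  case True
  then obtain k where k: "k_candidate v i' (jfun v n i') k"
    and k_max: "kfun v n i' = k"
    unfolding kfun_eq_Greatest
    using GreatestI_ex_nat[of "k_candidate v i' (jfun v n i')" "jfun v n i'"]
    by (force simp: k_candidate_def)
  have "k_candidate v i (jfun v n i) k"
    using assms k .
  then have "k \<le> kfun v n i"
    unfolding kfun_eq_Greatest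
    using Greatest_le_nat[of "k_candidate v i (jfun v n i)" k "jfun v n i"]
    by (auto simp: k_candidate_def)
  then show ?thesis
    using k_max by simp
qed (simp add: kfun_eq_Greatest)

theorem lemma10:
  fixes v :: "nat \<Rightarrow> 'a::metric_space" and n i1 i2 :: nat
  assumes distinct: "inj_on v {1..n}"
    and i1_ex: "\<exists>i\<in>{1..n}. dP v 1 i < dP v i n"
    and i1_def: "i1 = (GREATEST i. i \<in> {1..n} \<and> dP v 1 i < dP v i n)"
    and i2_def: "i2 = (LEAST i. i \<in> {1..n} \<and> dP v 1 i \<ge> dist (v i) (v n))"
    and le: "i2 \<le> i1"
  shows "\<forall>i\<in>{i2..<i1}. jfun v n (Suc i) \<le> jfun v n i \<and> kfun v n (Suc i) \<le> kfun v n i"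
proof
  fix i assume i: "i \<in> {i2..<i1}"
  obtain i0 where "i0 \<in> {1..n} \<and> dP v 1 i0 < dP v i0 n"
    using i1_ex by blast
  then have "i1 \<in> {1..n} \<and> dP v 1 i1 < dP v i1 n"
    unfolding i1_def by (rule GreatestI_nat[where b = n]) simp_all
  then have i1: "1 \<le> i1" "i1 \<le> n" "dP v 1 i1 < dP v i1 n"
    by simp_all
  have "i2 \<in> {1..n} \<and> dP v 1 i2 \<ge> dist (v i2) (v n)"
    unfolding i2_def by (rule LeastI[of _ n]) (use i1 in \<open>simp add: dP_nonneg\<close>)
  then have i2: "1 \<le> i2" "dist (v i2) (v n) \<le> dP v 1 i2"
    by simp_all
  have i_range: "1 \<le> i" "Suc i \<le> n"
    using i i1 i2 by auto
  have "dist (v i) (v n) \<le> dP v 1 i"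
    using dist_le_dP_prefix_mono[of i2 i v "v n"] i i2 by simp
  then have j: "j_candidate v n i (jfun v n i)"
    using i_range by (intro j_candidate_jfun) simp_all
  have "dP v 1 i < dP v i n"
    using dP_prefix_lt_suffix_mono[of i i1 n v] i i1 i_range by simp
  then have j_gt: "Suc i \<le> jfun v n i"
    using j by (rule j_candidate_gt)
  have j_Suc: "jfun v n (Suc i) \<le> jfun v n i"
    unfolding jfun_eq_Least[of v n "Suc i"]
    by (rule Least_le) (rule j_candidate_Suc[OF i_range(1) j_gt j])
  have "kfun v n (Suc i) \<le> kfun v n i"
    by (rule kfun_mono) (rule k_candidate_pred[OF i_range(1) j_gt j_Suc])
  with j_Suc show "jfun v n (Suc i) \<le> jfun v n i \<and> kfun v n (Suc i) \<le> kfun v n i" ..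
qed

end
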